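(* Let $\alpha\in(0,1)$, $T_+=\sqrt{1-\alpha}$, $\tau>0$, and let $N\ge 2$ and $1\le m_c<N$ be integers. Consider the $N$-dimensional Galerkin–Koornwinder (GK) system $$\frac{d\boldsymbol{y}}{dt}=A(\tau)\boldsymbol{y}+G_2(\boldsymbol{y})+G_3(\boldsymbol{y}),\qquad \boldsymbol{y}=(y_0,\dots,y_{N-1})^T\in\mathbb{R}^N,$$ with $A(\tau)$, $G_2$, $G_3$ as described in the context. Assume that $A(\tau)$ is diagonalizable over $\mathbb{C}$, and let $\boldsymbol{y}(t)$ be a solution of this system on an interval $[0,t_m]$. Let $\varphi_\tau\colon H_{\mathfrak{c}}\to H_{\mathfrak{s}}$ be a parameterization of $\boldsymbol{y}_{\mathfrak{s}}$ in terms of $\boldsymbol{y}_{\mathfrak{c}}$. Assume that for some $R>0$, $$\|\boldsymbol{y}(t)\|\le R,\qquad \|\boldsymbol{y}_{\mathfrak{c}}(t)+\varphi_\tau(\boldsymbol{y}_{\mathfrak{c}}(t))\|\le R,\qquad t\in[0,t_m].$$ Then there exists a constant $C(R)>0$ such that $$\overline{\Big\|\dot{\boldsymbol{z}}_{\mathfrak{c}}-\Lambda_{\mathfrak{c}}\boldsymbol{z}_{\mathfrak{c}}-Q_{\mathfrak{c}}^*\Big(G_2\big(P_{\mathfrak{c}}\boldsymbol{z}_{\mathfrak{c}}+\varphi_\tau(P_{\mathfrak{c}}\boldsymbol{z}_{\mathfrak{c}})\big)+G_3\big(P_{\mathfrak{c}}\boldsymbol{z}_{\mathfrak{c}}+\varphi_\tau(P_{\mathfrak{c}}\boldsymbol{z}_{\mathfrak{c}})\big)\Big)\Big\|^2}\;\le\;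 C(R)\,\overline{\big\|P_{\mathfrak{s}}\boldsymbol{z}_{\mathfrak{s}}-\varphi_\tau(P_{\mathfrak{c}}\boldsymbol{z}_{\mathfrak{c}})\big\|^2},$$ where $\overline{f}=\frac{1}{t_m}\int_0^{t_m}f(t)\,dt$ denotes the time average over $(0,t_m)$ and $\Lambda_{\mathfrak{c}}=\mathrm{diag}(\lambda_1,\dots,\lambda_{m_c})$.
   Context: Notation for the GK system. For $j\ge 0$ let $\kappa_j=\frac{(j^2+1)((j+1)^2+1)}{2j+1}$ (the squared norm of the $j$-th augmented Koornwinder polynomial) and $K_j(-1)=(j^2+j+1)(-1)^j$. For each $n\ge1$, the coefficients $\boldsymbol{a}_n=(a_{n,0},\dots,a_{n,n-1})^T$ are the solution of the upper triangular system $\mathbf{T}\boldsymbol{a}_n=\boldsymbol{b}_n$, where $\mathbf{T}=(\mathbf{T}_{i,j})_{0\le i,j\le n-1}$ has $\mathbf{T}_{i,j}=0$ if $j<i$, $\mathbf{T}_{i,i}=i^2+1$, $\mathbf{T}_{i,j}=-(2i+1)$ if $j>i$, and $b_{n,i}=-\tfrac12(2i+1)(n+i+1)(n-i)$ if $n+i$ is even, $b_{n,i}=(n^2+n)(2i+1)-\tfrac{i}{2}(n+i)(n-i+1)-\tfrac12(i+1)(n-i-1)(n+i+2)$ if $n+i$ is odd. The matrix $A(\tau)$ is the $N\times N$ real matrix with entries, for $0\le j,n\le N-1$, $$(A(\tau))_{j,n}=\frac{1}{\kappa_j}\Big(1-3T_+^2-\alpha K_n(-1)+\frac{2}{\tau}\sum_{k=0}^{n-1}a_{n,k}\big(\delta_{j,k}\kappa_j-1\big)\Big).$$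 The nonlinear terms are $G_2(\boldsymbol{y})=-3T_+\big(\sum_{n=0}^{N-1}y_n\big)^2\boldsymbol{\nu}_N$ and $G_3(\boldsymbol{y})=-\big(\sum_{n=0}^{N-1}y_n\big)^3\boldsymbol{\nu}_N$, with $\boldsymbol{\nu}_N=(1/\kappa_0,\dots,1/\kappa_{N-1})^T$; they are extended to $\mathbb{C}^N$ by the same formulas. (This system is the GK approximation of the delay equation $\dot{\hat T}=(1-3T_+^2)\hat T(t)-\alpha\hat T(t-\tau)-3T_+\hat T^2(t)-\hat T^3(t)$.) Spectral notation. The eigenvalues $\lambda_1,\dots,\lambda_N$ of $A(\tau)$ (repeated with multiplicity) are ordered by decreasing real part, and among equal real parts by decreasing imaginary part; $\boldsymbol{e}_1,\dots,\boldsymbol{e}_N$ are corresponding eigenvectors. $P=[\boldsymbol{e}_1,\dots,\boldsymbol{e}_N]$, $P_{\mathfrak{c}}=[\boldsymbol{e}_1,\dots,\boldsymbol{e}_{m_c}]$, $P_{\mathfrak{s}}=[\boldsymbol{e}_{m_c+1},\dots,\boldsymbol{e}_N]$; $Q$ is the $N\times N$ matrix whose columns are eigenvectors of the conjugate transpose $A(\tau)^*$, normalized so that $Q^*P=I_{N\times N}$, and $Q_{\mathfrak{c}}$ is the matrix of the first $m_c$ columns of $Q$. $H_{\mathfrak{c}}=\mathrm{span}\{\boldsymbol{e}_1,\dots,\boldsymbol{e}_{m_c}\}$, $H_{\mathfrak{s}}=\mathrm{span}\{\boldsymbol{e}_{m_c+1},\dots,\boldsymbol{e}_N\}$. For a solution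 $\boldsymbol{y}(t)$, $\boldsymbol{z}=(z_1,\dots,z_N)^T$ is defined by $\boldsymbol{y}=P\boldsymbol{z}$, $\boldsymbol{z}_{\mathfrak{c}}=(z_1,\dots,z_{m_c})^T$, $\boldsymbol{z}_{\mathfrak{s}}=(z_{m_c+1},\dots,z_N)^T$, $\boldsymbol{y}_{\mathfrak{c}}=P_{\mathfrak{c}}\boldsymbol{z}_{\mathfrak{c}}$ (low-mode projection) and $\boldsymbol{y}_{\mathfrak{s}}=P_{\mathfrak{s}}\boldsymbol{z}_{\mathfrak{s}}$ (high-mode projection). $\|\cdot\|$ is the Euclidean (Hermitian) norm. *)

theory Defs
  imports "HOL-Analysis.Analysis" "Jordan_Normal_Form.Schur_Decomposition"
begin

text \<open>Squared norm of the j-th augmented Koornwinder polynomial.\<close>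
definition gk_kappa :: "nat \<Rightarrow> real" where
  "gk_kappa j = ((real j)^2 + 1) * ((real j + 1)^2 + 1) / (2 * real j + 1)"

text \<open>K_j(-1) = (j^2+j+1)(-1)^j.\<close>
definition gk_K :: "nat \<Rightarrow> real" where
  "gk_K j = ((real j)^2 + real j + 1) * (-1)^j"

definition gk_T :: "nat \<Rightarrow> real mat" where
  "gk_T n = mat n n (\<lambda>(i,j). if j < i then 0 else if j = i then (real i)^2 + 1
                             else - (2 * real i + 1))"

definition gk_b :: "nat \<Rightarrow> real vec" where
  "gk_b n = vec n (\<lambda>i. if even (n + i)
      then - (1/2) * (2 * real i + 1) * (real n + real i + 1) * (real n - real i)
      else ((real n)^2 + real n) * (2 * real i + 1)
           - (real i / 2) * (real n + real i) * (real n - real i + 1)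
           - (1/2) * (real i + 1) * (real n - real i - 1) * (real n + real i + 2))"

definition gk_a :: "nat \<Rightarrow> real vec" where
  "gk_a n = (THE x. x \<in> carrier_vec n \<and> gk_T n *\<^sub>v x = gk_b n)"

definition gk_A :: "real \<Rightarrow> real \<Rightarrow> nat \<Rightarrow> real mat" where
  "gk_A \<alpha> \<tau> N = mat N N (\<lambda>(j,n). (1 / gk_kappa j) *
      (1 - 3 * (sqrt (1 - \<alpha>))^2 - \<alpha> * gk_K n
       + (2 / \<tau>) * (\<Sum>k<n. gk_a n $ k * ((if j = k then gk_kappa j else 0) - 1))))"

definition gk_G2 :: "real \<Rightarrow> nat \<Rightarrow> 'a::real_field vec \<Rightarrow> 'a vec" where
  "gk_G2 \<alpha> N v = vec N (\<lambda>j. of_real (- 3 * sqrt (1 - \<alpha>) / gk_kappa j) * (\<Sum>n<N. v $ n)^2)"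

definition gk_G3 :: "nat \<Rightarrow> 'a::real_field vec \<Rightarrow> 'a vec" where
  "gk_G3 N v = vec N (\<lambda>j. of_real (- 1 / gk_kappa j) * (\<Sum>n<N. v $ n)^3)"

definition cnorm :: "complex vec \<Rightarrow> real" where
  "cnorm v = sqrt (\<Sum>i<dim_vec v. (cmod (v $ i))^2)"

definition first_cols :: "nat \<Rightarrow> 'a mat \<Rightarrow> 'a mat" where
  "first_cols m M = mat (dim_row M) m (\<lambda>(i,j). M $$ (i,j))"

definition last_cols :: "nat \<Rightarrow> 'a mat \<Rightarrow> 'a mat" where
  "last_cols m M = mat (dim_row M) (dim_col M - m) (\<lambda>(i,j). M $$ (i, m + j))"

definition first_entries :: "nat \<Rightarrow> 'a vec \<Rightarrow> 'a vec" where
  "first_entries m v = vec m (\<lambda>i. v $ i)"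

definition last_entries :: "nat \<Rightarrow> 'a vec \<Rightarrow> 'a vec" where
  "last_entries m v = vec (dim_vec v - m) (\<lambda>i. v $ (m + i))"

definition col_space :: "'a::semiring_1 mat \<Rightarrow> 'a vec set" where
  "col_space M = {M *\<^sub>v w | w. w \<in> carrier_vec (dim_col M)}"

definition time_avg :: "real \<Rightarrow> (real \<Rightarrow> real) \<Rightarrow> real" where
  "time_avg tm f = (1 / tm) * integral {0..tm} f"

end

theory Submission
  imports Defs
begin

(* Since Q* P = I and A P = P diag(lam), the modal coordinates z = Q* y satisfy
   z' = diag(lam) z + Q* G(y) exactly, where G = G_2 + G_3.  Hence the residual on the left-hand
   side is Q_c* (G(y) - G(u)) with u = y_c + phi(y_c), and y - u = y_s - phi(y_c).  Every entry
   of G is a quadratic plus a cubic polynomial in the sum of the entries of its argument, so G is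
   Lipschitz on the ball of radius R; squaring this pointwise bound and averaging over (0, tm)
   gives the claim with a constant depending only on alpha, N, m_c, Q and R. *)

lemma mult_mat_vec_index_sum:
  "A \<in> carrier_mat m n \<Longrightarrow> v \<in> carrier_vec n \<Longrightarrow> i < m \<Longrightarrow>
   (A *\<^sub>v v) $ i = (\<Sum>k<n. A $$ (i,k) * v $ k)"
  by (auto simp: scalar_prod_def atLeast0LessThan intro!: sum.cong)

lemma mat_adjoint_carrier: "A \<in> carrier_mat n m \<Longrightarrow> mat_adjoint A \<in> carrier_mat m n"
  by (auto simp: mat_adjoint_def)

lemma mat_adjoint_index:
  "A \<in> carrier_mat n m \<Longrightarrow> i < m \<Longrightarrow> j < n \<Longrightarrow> mat_adjoint A $$ (i,j) = conjugate (A $$ (j,i))"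
  by (auto simp: mat_adjoint_def mat_of_rows_def)

lemma mat_adjoint_first_cols_mult_mat_vec:
  assumes Q: "Q \<in> carrier_mat n n'" and w: "w \<in> carrier_vec n" and i: "i < m" and m: "m \<le> n'"
  shows "(mat_adjoint (first_cols m Q) *\<^sub>v w) $ i = (mat_adjoint Q *\<^sub>v w) $ i"
proof -
  have FQ: "first_cols m Q \<in> carrier_mat n m" using Q by (simp add: first_cols_def)
  have "(mat_adjoint (first_cols m Q) *\<^sub>v w) $ i = (\<Sum>k<n. mat_adjoint (first_cols m Q) $$ (i,k) * w $ k)"
    by (rule mult_mat_vec_index_sum[OF mat_adjoint_carrier[OF FQ] w i])
  also have "\<dots> = (\<Sum>k<n. mat_adjoint Q $$ (i,k) * w $ k)"
  proof (intro sum.cong refl)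
    fix k assume "k \<in> {..<n}"
    then have k: "k < n" by simp
    show "mat_adjoint (first_cols m Q) $$ (i,k) * w $ k = mat_adjoint Q $$ (i,k) * w $ k"
      using Q i m k unfolding mat_adjoint_index[OF FQ i k]
      by (simp add: mat_adjoint_index[OF Q] first_cols_def)
  qed
  also have "\<dots> = (mat_adjoint Q *\<^sub>v w) $ i"
    using i m by (intro mult_mat_vec_index_sum[OF mat_adjoint_carrier[OF Q] w, symmetric]) simp
  finally show ?thesis .
qed

lemma mult_mat_vec_first_last_cols:
  assumes P: "P \<in> carrier_mat n N" and z: "z \<in> carrier_vec N" and m: "m \<le> N"
  shows "P *\<^sub>v z = first_cols m P *\<^sub>v first_entries m z + last_cols m P *\<^sub>v last_entries m z"
proof -
  have F: "first_cols m P \<in> carrier_mat n m" and L: "last_cols m P \<in> carrier_mat n (N - m)"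
    using P by (auto simp: first_cols_def last_cols_def)
  have Fz: "first_entries m z \<in> carrier_vec m" and Lz: "last_entries m z \<in> carrier_vec (N - m)"
    using z by (auto simp: first_entries_def last_entries_def)
  have "(P *\<^sub>v z) $ j = (first_cols m P *\<^sub>v first_entries m z + last_cols m P *\<^sub>v last_entries m z) $ j"
    if j: "j < n" for j
  proof -
    have "(\<Sum>k<N. P $$ (j,k) * z $ k) = (\<Sum>k<m. P $$ (j,k) * z $ k) + (\<Sum>k=m..<N. P $$ (j,k) * z $ k)"
      using m by (simp add: lessThan_atLeast0 sum.atLeastLessThan_concat)
    also have "(\<Sum>k=m..<N. P $$ (j,k) * z $ k) = (\<Sum>k<N-m. P $$ (j,m+k) * z $ (m+k))"
      using m sum.shift_bounds_nat_ivl[of "\<lambda>k. P $$ (j,k) * z $ k" 0 m "N-m"]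
      by (simp add: lessThan_atLeast0 add.commute)
    moreover have jd: "j < dim_vec (last_cols m P *\<^sub>v last_entries m z)" using L j by simp
    ultimately show ?thesis
      unfolding mult_mat_vec_index_sum[OF P z j] index_add_vec(1)[OF jd]
        mult_mat_vec_index_sum[OF F Fz j] mult_mat_vec_index_sum[OF L Lz j]
      using P z j by (simp add: first_cols_def last_cols_def first_entries_def last_entries_def)
  qed
  then show ?thesis using P F L by (intro eq_vecI) auto
qed

lemma left_inverse_eigenbasis_mult_mat_vec:
  fixes A P Q :: "'a::field mat"
  assumes A: "A \<in> carrier_mat n n" and P: "P \<in> carrier_mat n n" and Q: "Q \<in> carrier_mat n n"
    and eig: "\<And>i. i < n \<Longrightarrow> A *\<^sub>v col P i = lam i \<cdot>\<^sub>v col P i"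
    and QP: "Q * P = 1\<^sub>m n" and x: "x \<in> carrier_vec n" and i: "i < n"
  shows "(Q *\<^sub>v (A *\<^sub>v x)) $ i = lam i * (Q *\<^sub>v x) $ i"
proof -
  define L where "L = mat n n (\<lambda>(i,j). if i = j then lam i else 0)"
  have L: "L \<in> carrier_mat n n" by (simp add: L_def)
  have AP: "A * P = P * L"
  proof (rule eq_matI)
    fix a b assume "a < dim_row (P * L)" "b < dim_col (P * L)"
    then have a: "a < n" and b: "b < n" using P L by auto
    have "(P * L) $$ (a,b) = (\<Sum>k<n. P $$ (a,k) * L $$ (k,b))"
      using P L a b by (simp add: scalar_prod_def atLeast0LessThan)
    also have "\<dots> = (\<Sum>k<n. if k = b then P $$ (a,b) * lam b else 0)"
      using b by (intro sum.cong) (auto simp: L_def)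
    also have "\<dots> = (A *\<^sub>v col P b) $ a" using eig[OF b] P a b by simp
    finally show "(A * P) $$ (a,b) = (P * L) $$ (a,b)" using A P a b by simp
  qed (use A P L in auto)
  have "Q * A = Q * A * (P * Q)"
    using mat_mult_left_right_inverse[OF Q P QP] Q A by simp
  also have "\<dots> = Q * (A * P) * Q"
    using Q A P by (simp add: assoc_mult_mat[of _ n n _ n _ n])
  also have "\<dots> = Q * P * L * Q"
    unfolding AP using Q P L by (simp add: assoc_mult_mat[of _ n n _ n _ n])
  also have "\<dots> = L * Q"
    using QP L by simp
  finally have "Q *\<^sub>v (A *\<^sub>v x) = L *\<^sub>v (Q *\<^sub>v x)"
    using Q A L x by (metis assoc_mult_mat_vec)
  also have "\<dots> $ i = (\<Sum>k<n. L $$ (i,k) * (Q *\<^sub>v x) $ k)"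
    using L Q x i by (intro mult_mat_vec_index_sum) auto
  also have "\<dots> = (\<Sum>k<n. if k = i then lam i * (Q *\<^sub>v x) $ i else 0)"
    using i by (intro sum.cong) (auto simp: L_def)
  finally show ?thesis using i by simp
qed

lemma cnorm_eq_L2_set: "cnorm v = L2_set (\<lambda>i. cmod (v $ i)) {..<dim_vec v}"
  by (simp add: cnorm_def L2_set_def)

lemma cnorm_nonneg: "0 \<le> cnorm v"
  by (simp add: cnorm_eq_L2_set)

lemma cnorm_le_if_entries_le:
  fixes v :: "complex vec" and b :: "nat \<Rightarrow> real"
  assumes v: "v \<in> carrier_vec n" and entries: "\<And>i. i < n \<Longrightarrow> cmod (v $ i) \<le> b i * x"
    and x: "0 \<le> x"
  shows "cnorm v \<le> L2_set b {..<n} * x"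
proof -
  have "cnorm v = L2_set (\<lambda>i. cmod (v $ i)) {..<n}"
    using v by (simp add: cnorm_eq_L2_set)
  also have "\<dots> \<le> L2_set (\<lambda>i. b i * x) {..<n}"
    using entries by (intro L2_set_mono) auto
  also have "\<dots> = L2_set b {..<n} * x" by (rule L2_set_left_distrib[OF x, symmetric])
  finally show ?thesis .
qed

lemma cmod_sum_mult_le_L2_set:
  "cmod (\<Sum>k<n. a k * b k) \<le> L2_set (\<lambda>k. cmod (a k)) {..<n} * L2_set (\<lambda>k. cmod (b k)) {..<n}"
proof -
  have "cmod (\<Sum>k<n. a k * b k) \<le> (\<Sum>k<n. \<bar>cmod (a k)\<bar> * \<bar>cmod (b k)\<bar>)"
    by (rule order_trans[OF norm_sum]) (simp add: norm_mult)
  also have "\<dots> \<le> L2_set (\<lambda>k. cmod (a k)) {..<n} * L2_set (\<lambda>k. cmod (b k)) {..<n}"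
    by (rule L2_set_mult_ineq)
  finally show ?thesis .
qed

lemma cmod_sum_entries_le: "v \<in> carrier_vec n \<Longrightarrow> cmod (\<Sum>k<n. v $ k) \<le> sqrt (real n) * cnorm v"
  using cmod_sum_mult_le_L2_set[of "\<lambda>_. 1" "\<lambda>k. v $ k" n]
  by (simp add: cnorm_eq_L2_set L2_set_constant)

lemma cnorm_mult_mat_vec_le:
  assumes M: "M \<in> carrier_mat m n" and x: "x \<in> carrier_vec n"
  shows "cnorm (M *\<^sub>v x) \<le> L2_set (\<lambda>i. L2_set (\<lambda>k. cmod (M $$ (i,k))) {..<n}) {..<m} * cnorm x"
  by (rule cnorm_le_if_entries_le)
    (use M x cmod_sum_mult_le_L2_set
      in \<open>auto simp: mult_mat_vec_index_sum cnorm_eq_L2_set simp del: index_mult_mat_vec\<close>)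

section \<open>Curves of vectors and time averages\<close>

lemma continuous_on_cnorm:
  fixes f :: "'a::topological_space \<Rightarrow> complex vec"
  assumes "\<And>t. t \<in> S \<Longrightarrow> f t \<in> carrier_vec n" and "\<And>k. k < n \<Longrightarrow> continuous_on S (\<lambda>t. f t $ k)"
  shows "continuous_on S (\<lambda>t. cnorm (f t))"
proof -
  have "continuous_on S (\<lambda>t. sqrt (\<Sum>k<n. (cmod (f t $ k))^2))"
    using assms(2) by (intro continuous_intros) auto
  then show ?thesis by (rule continuous_on_eq) (simp add: cnorm_def carrier_vecD[OF assms(1)])
qed

lemma continuous_on_mult_mat_vec:
  fixes M :: "'b::real_normed_field mat" and f :: "'a::topological_space \<Rightarrow> 'b vec"
  assumes M: "M \<in> carrier_mat m n" and i: "i < m" and f: "\<And>t. t \<in> S \<Longrightarrow> f t \<in> carrier_vec n"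
    and cont: "\<And>k. k < n \<Longrightarrow> continuous_on S (\<lambda>t. f t $ k)"
  shows "continuous_on S (\<lambda>t. (M *\<^sub>v f t) $ i)"
proof -
  have "continuous_on S (\<lambda>t. \<Sum>k<n. M $$ (i,k) * f t $ k)"
    using cont by (intro continuous_intros) auto
  then show ?thesis
    by (rule continuous_on_eq) (use M i f in \<open>simp add: mult_mat_vec_index_sum del: index_mult_mat_vec\<close>)
qed

lemma has_vector_derivative_mult_mat_vec_of_real:
  fixes y :: "real \<Rightarrow> real vec" and M :: "complex mat"
  assumes M: "M \<in> carrier_mat m n" and i: "i < m" and t: "t \<in> S" and d: "d \<in> carrier_vec n"
    and y: "\<And>s. s \<in> S \<Longrightarrow> y s \<in> carrier_vec n"
    and y': "\<And>k. k < n \<Longrightarrow> ((\<lambda>s. y s $ k) has_real_derivative d $ k) (at t within S)"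
  shows "((\<lambda>s. (M *\<^sub>v map_vec complex_of_real (y s)) $ i) has_vector_derivative
           (M *\<^sub>v map_vec complex_of_real d) $ i) (at t within S)"
proof -
  have sum_form: "(M *\<^sub>v map_vec complex_of_real v) $ i = (\<Sum>k<n. M $$ (i,k) * complex_of_real (v $ k))"
    if "v \<in> carrier_vec n" for v
    using M i that by (simp add: mult_mat_vec_index_sum del: index_mult_mat_vec)
  have "((\<lambda>s. \<Sum>k<n. M $$ (i,k) * complex_of_real (y s $ k)) has_vector_derivative
          (\<Sum>k<n. M $$ (i,k) * complex_of_real (d $ k))) (at t within S)"
    using y' by (intro has_vector_derivative_sum has_vector_derivative_mult_right
        has_vector_derivative_of_real) auto
  then have "((\<lambda>s. \<Sum>k<n. M $$ (i,k) * complex_of_real (y s $ k)) has_vector_derivative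
          (M *\<^sub>v map_vec complex_of_real d) $ i) (at t within S)"
    by (simp only: sum_form[OF d])
  then show ?thesis
    by (rule has_vector_derivative_transform[OF t, rotated]) (simp add: sum_form y)
qed

lemma time_avg_le_cmult:
  assumes tm: "0 < tm" and C: "0 \<le> C" and g: "g integrable_on {0..tm}"
    and g_nonneg: "\<And>t. t \<in> {0..tm} \<Longrightarrow> 0 \<le> g t" and le: "\<And>t. t \<in> {0..tm} \<Longrightarrow> f t \<le> C * g t"
  shows "time_avg tm f \<le> C * time_avg tm g"
proof -
  have "integral {0..tm} f \<le> C * integral {0..tm} g"
  proof (cases "f integrable_on {0..tm}")
    case True
    then have "integral {0..tm} f \<le> integral {0..tm} (\<lambda>t. C * g t)"
      using le integrable_on_cmult_left[OF g, of C] by (intro integral_le) auto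
    then show ?thesis by simp
  next
    case False
    \<comment> \<open>then the integral of f is 0 by convention\<close>
    have "0 \<le> integral {0..tm} g" using g g_nonneg by (rule integral_nonneg)
    then show ?thesis using False C by (simp add: not_integrable_integral)
  qed
  then show ?thesis using tm by (simp add: time_avg_def divide_right_mono)
qed

section \<open>The GK vector field\<close>

lemma cmod_quadratic_cubic_diff_le:
  fixes a b c2 c3 :: complex
  assumes a: "cmod a \<le> B" and b: "cmod b \<le> B"
  shows "cmod (c2 * a^2 + c3 * a^3 - (c2 * b^2 + c3 * b^3))
           \<le> (cmod c2 * (2 * B) + cmod c3 * (3 * B^2)) * cmod (a - b)"
proof -
  have B: "0 \<le> B" using a norm_ge_zero order_trans by blast
  have factor: "c2 * a^2 + c3 * a^3 - (c2 * b^2 + c3 * b^3) = (c2 * (a + b) + c3 * (a^2 + a * b + b^2)) * (a - b)"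
    by (simp add: algebra_simps power2_eq_square power3_eq_cube)
  have "cmod (a + b) \<le> 2 * B" using norm_triangle_ineq[of a b] a b by simp
  moreover have "cmod (a^2 + a * b + b^2) \<le> 3 * B^2"
  proof -
    have "cmod (a^2 + a * b + b^2) \<le> cmod a ^ 2 + cmod a * cmod b + cmod b ^ 2"
      by (metis norm_mult norm_power norm_triangle_le norm_triangle_ineq add_mono order_refl)
    also have "\<dots> \<le> B^2 + B * B + B^2"
      using a b B by (intro add_mono power_mono mult_mono) auto
    finally show ?thesis by (simp add: power2_eq_square)
  qed
  ultimately have "cmod (c2 * (a + b) + c3 * (a^2 + a * b + b^2)) \<le> cmod c2 * (2 * B) + cmod c3 * (3 * B^2)"
    by (intro order_trans[OF norm_triangle_ineq] add_mono) (simp_all add: norm_mult mult_left_mono)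
  then show ?thesis
    unfolding factor norm_mult by (rule mult_right_mono) simp
qed

lemma gk_A_carrier: "gk_A \<alpha> \<tau> N \<in> carrier_mat N N"
  by (simp add: gk_A_def)

lemma gk_G2_carrier [simp]: "gk_G2 \<alpha> N v \<in> carrier_vec N"
  by (simp add: gk_G2_def)

lemma gk_G3_carrier [simp]: "gk_G3 N v \<in> carrier_vec N"
  by (simp add: gk_G3_def)

lemma gk_vector_field_carrier:
  "y \<in> carrier_vec N \<Longrightarrow> gk_A \<alpha> \<tau> N *\<^sub>v y + gk_G2 \<alpha> N y + gk_G3 N y \<in> carrier_vec N"
  by (intro add_carrier_vec mult_mat_vec_carrier[OF gk_A_carrier]) simp_all

lemma gk_vector_field_of_real:
  fixes y :: "real vec"
  assumes y: "y \<in> carrier_vec N"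
  shows "map_vec complex_of_real (gk_A \<alpha> \<tau> N *\<^sub>v y + gk_G2 \<alpha> N y + gk_G3 N y) =
    map_mat complex_of_real (gk_A \<alpha> \<tau> N) *\<^sub>v map_vec complex_of_real y
    + (gk_G2 \<alpha> N (map_vec complex_of_real y) + gk_G3 N (map_vec complex_of_real y))"
proof (rule eq_vecI)
  note A = gk_A_carrier[of \<alpha> \<tau> N]
  fix k assume "k < dim_vec (map_mat complex_of_real (gk_A \<alpha> \<tau> N) *\<^sub>v map_vec complex_of_real y
    + (gk_G2 \<alpha> N (map_vec complex_of_real y) + gk_G3 N (map_vec complex_of_real y)))"
  then have k: "k < N" by (simp add: carrier_vecD[OF gk_G3_carrier])
  have "map_vec complex_of_real (gk_A \<alpha> \<tau> N *\<^sub>v y) =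
      map_mat complex_of_real (gk_A \<alpha> \<tau> N) *\<^sub>v map_vec complex_of_real y"
    using A y by (rule of_real_hom.mult_mat_vec_hom)
  then have "complex_of_real ((gk_A \<alpha> \<tau> N *\<^sub>v y) $ k) =
      (map_mat complex_of_real (gk_A \<alpha> \<tau> N) *\<^sub>v map_vec complex_of_real y) $ k"
    using A k by (metis dim_mult_mat_vec carrier_matD(1) index_map_vec(1))
  moreover have "(\<Sum>n<N. map_vec complex_of_real y $ n) = of_real (\<Sum>n<N. y $ n)"
    using y by simp
  ultimately show "map_vec complex_of_real (gk_A \<alpha> \<tau> N *\<^sub>v y + gk_G2 \<alpha> N y + gk_G3 N y) $ k =
      (map_mat complex_of_real (gk_A \<alpha> \<tau> N) *\<^sub>v map_vec complex_of_real y
      + (gk_G2 \<alpha> N (map_vec complex_of_real y) + gk_G3 N (map_vec complex_of_real y))) $ k"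
    using A k by (simp add: gk_G2_def gk_G3_def del: index_mult_mat_vec)
qed (simp add: carrier_vecD[OF gk_G3_carrier])

lemma gk_G_lipschitz_on_cnorm_ball:
  obtains L where "\<And>u w :: complex vec. u \<in> carrier_vec N \<Longrightarrow> w \<in> carrier_vec N \<Longrightarrow>
    cnorm u \<le> R \<Longrightarrow> cnorm w \<le> R \<Longrightarrow>
    cnorm ((gk_G2 \<alpha> N u + gk_G3 N u) - (gk_G2 \<alpha> N w + gk_G3 N w)) \<le> L * cnorm (u - w)"
proof -
  define c2 :: "nat \<Rightarrow> complex" where "c2 k = of_real (- 3 * sqrt (1 - \<alpha>) / gk_kappa k)" for k
  define c3 :: "nat \<Rightarrow> complex" where "c3 k = of_real (- 1 / gk_kappa k)" for k
  define B where "B = sqrt (real N) * R"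
  define b where "b k = cmod (c2 k) * (2 * B) + cmod (c3 k) * (3 * B^2)" for k
  have "cnorm ((gk_G2 \<alpha> N u + gk_G3 N u) - (gk_G2 \<alpha> N w + gk_G3 N w))
          \<le> (L2_set b {..<N} * sqrt (real N)) * cnorm (u - w)"
    if u: "u \<in> carrier_vec N" and w: "w \<in> carrier_vec N" and Ru: "cnorm u \<le> R" and Rw: "cnorm w \<le> R"
    for u w :: "complex vec"
  proof -
    define Su where "Su = (\<Sum>n<N. u $ n)"
    define Sw where "Sw = (\<Sum>n<N. w $ n)"
    have B: "0 \<le> B" using Ru cnorm_nonneg[of u] by (simp add: B_def)
    have "cmod S \<le> B" if "S = (\<Sum>n<N. v $ n)" "v \<in> carrier_vec N" "cnorm v \<le> R" for S v
      using cmod_sum_entries_le[OF that(2)] that(1,3) by (simp add: B_def mult_left_mono order_trans)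
    then have Su_le: "cmod Su \<le> B" and Sw_le: "cmod Sw \<le> B"
      using u w Ru Rw by (auto simp: Su_def Sw_def)
    have diff: "cmod (Su - Sw) \<le> sqrt (real N) * cnorm (u - w)"
      using cmod_sum_entries_le[of "u - w" N] u w by (simp add: Su_def Sw_def sum_subtractf)
    have "cnorm ((gk_G2 \<alpha> N u + gk_G3 N u) - (gk_G2 \<alpha> N w + gk_G3 N w))
            \<le> L2_set b {..<N} * (sqrt (real N) * cnorm (u - w))"
    proof (rule cnorm_le_if_entries_le)
      fix k assume k: "k < N"
      have "cmod (((gk_G2 \<alpha> N u + gk_G3 N u) - (gk_G2 \<alpha> N w + gk_G3 N w)) $ k)
              = cmod (c2 k * Su^2 + c3 k * Su^3 - (c2 k * Sw^2 + c3 k * Sw^3))"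
        using k by (simp add: c2_def c3_def Su_def Sw_def gk_G2_def gk_G3_def)
      also have "\<dots> \<le> b k * cmod (Su - Sw)"
        unfolding b_def by (rule cmod_quadratic_cubic_diff_le[OF Su_le Sw_le])
      also have "\<dots> \<le> b k * (sqrt (real N) * cnorm (u - w))"
        using diff B by (intro mult_left_mono) (auto simp: b_def)
      finally show "cmod (((gk_G2 \<alpha> N u + gk_G3 N u) - (gk_G2 \<alpha> N w + gk_G3 N w)) $ k)
                      \<le> b k * (sqrt (real N) * cnorm (u - w))" .
    qed (simp_all add: cnorm_nonneg)
    then show ?thesis by (simp add: mult.assoc)
  qed
  then show ?thesis by (rule that)
qed

lemma gk_G_diff_mult_mat_vec_bound:
  fixes M :: "complex mat"
  assumes M: "M \<in> carrier_mat m N"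
  obtains C where "0 < C" and "\<And>Y u. Y \<in> carrier_vec N \<Longrightarrow> u \<in> carrier_vec N \<Longrightarrow>
    cnorm Y \<le> R \<Longrightarrow> cnorm u \<le> R \<Longrightarrow>
    (cnorm (M *\<^sub>v ((gk_G2 \<alpha> N Y + gk_G3 N Y) - (gk_G2 \<alpha> N u + gk_G3 N u))))^2
      \<le> C * (cnorm (Y - u))^2"
proof -
  obtain L where L: "\<And>u w :: complex vec. u \<in> carrier_vec N \<Longrightarrow> w \<in> carrier_vec N \<Longrightarrow>
    cnorm u \<le> R \<Longrightarrow> cnorm w \<le> R \<Longrightarrow>
    cnorm ((gk_G2 \<alpha> N u + gk_G3 N u) - (gk_G2 \<alpha> N w + gk_G3 N w)) \<le> L * cnorm (u - w)"
    using gk_G_lipschitz_on_cnorm_ball by blast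
  define K where "K = L2_set (\<lambda>i. L2_set (\<lambda>k. cmod (M $$ (i,k))) {..<N}) {..<m}"
  have "(cnorm (M *\<^sub>v ((gk_G2 \<alpha> N Y + gk_G3 N Y) - (gk_G2 \<alpha> N u + gk_G3 N u))))^2
          \<le> ((K * L)^2 + 1) * (cnorm (Y - u))^2"
    if "Y \<in> carrier_vec N" "u \<in> carrier_vec N" "cnorm Y \<le> R" "cnorm u \<le> R" for Y u
  proof -
    let ?x = "(gk_G2 \<alpha> N Y + gk_G3 N Y) - (gk_G2 \<alpha> N u + gk_G3 N u)"
    have "cnorm (M *\<^sub>v ?x) \<le> K * cnorm ?x"
      unfolding K_def by (rule cnorm_mult_mat_vec_le[OF M]) simp
    also have "\<dots> \<le> K * (L * cnorm (Y - u))"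
      unfolding K_def by (intro mult_left_mono L that) simp
    finally have "(cnorm (M *\<^sub>v ?x))^2 \<le> (K * L * cnorm (Y - u))^2"
      by (intro power_mono) (simp_all add: cnorm_nonneg mult.assoc)
    also have "\<dots> \<le> ((K * L)^2 + 1) * (cnorm (Y - u))^2"
      by (simp add: power_mult_distrib distrib_right)
    finally show ?thesis .
  qed
  then show ?thesis by (intro that[of "(K * L)^2 + 1"]) (auto intro: add_nonneg_pos)
qed

section \<open>Trajectories in modal coordinates\<close>

locale gk_modal_trajectory =
  fixes \<alpha> \<tau> :: real and N :: nat and lam :: "nat \<Rightarrow> complex" and P Q :: "complex mat"
    and tm :: real and y :: "real \<Rightarrow> real vec" and z :: "real \<Rightarrow> complex vec"
  assumes P_carrier: "P \<in> carrier_mat N N" and Q_carrier: "Q \<in> carrier_mat N N"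
    and eigvecs: "\<And>i. i < N \<Longrightarrow>
      map_mat complex_of_real (gk_A \<alpha> \<tau> N) *\<^sub>v col P i = lam i \<cdot>\<^sub>v col P i"
    and QP: "mat_adjoint Q * P = 1\<^sub>m N"
    and tm_pos: "0 < tm"
    and y_carrier: "\<And>t. t \<in> {0..tm} \<Longrightarrow> y t \<in> carrier_vec N"
    and y_deriv: "\<And>t i. t \<in> {0..tm} \<Longrightarrow> i < N \<Longrightarrow> ((\<lambda>s. y s $ i) has_real_derivative
      (gk_A \<alpha> \<tau> N *\<^sub>v y t + gk_G2 \<alpha> N (y t) + gk_G3 N (y t)) $ i) (at t within {0..tm})"
    and z_carrier: "\<And>t. t \<in> {0..tm} \<Longrightarrow> z t \<in> carrier_vec N"
    and z_coords: "\<And>t. t \<in> {0..tm} \<Longrightarrow> P *\<^sub>v z t = map_vec complex_of_real (y t)"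
begin

lemma z_eq_mat_adjoint_mult:
  assumes t: "t \<in> {0..tm}"
  shows "z t = mat_adjoint Q *\<^sub>v map_vec complex_of_real (y t)"
proof -
  have "mat_adjoint Q *\<^sub>v map_vec complex_of_real (y t) = (mat_adjoint Q * P) *\<^sub>v z t"
    using P_carrier Q_carrier z_carrier[OF t]
    by (simp add: z_coords[OF t, symmetric]
        assoc_mult_mat_vec[OF mat_adjoint_carrier[OF Q_carrier] P_carrier z_carrier[OF t]])
  then show ?thesis using QP z_carrier[OF t] by simp
qed

lemma continuous_on_y:
  assumes k: "k < N"
  shows "continuous_on {0..tm} (\<lambda>t. y t $ k)"
proof (unfold continuous_on_eq_continuous_within, intro ballI)
  fix t assume "t \<in> {0..tm}"
  then show "continuous (at t within {0..tm}) (\<lambda>t. y t $ k)"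
    by (rule DERIV_continuous[OF y_deriv[OF _ k]])
qed

lemma z_has_vector_derivative:
  assumes t: "t \<in> {0..tm}" and i: "i < N"
  shows "((\<lambda>s. z s $ i) has_vector_derivative
    lam i * z t $ i + (mat_adjoint Q *\<^sub>v (gk_G2 \<alpha> N (map_vec complex_of_real (y t))
                                     + gk_G3 N (map_vec complex_of_real (y t)))) $ i) (at t within {0..tm})"
proof -
  let ?Y = "map_vec complex_of_real (y t)"
  let ?A = "map_mat complex_of_real (gk_A \<alpha> \<tau> N)"
  let ?G = "gk_G2 \<alpha> N ?Y + gk_G3 N ?Y"
  have A: "?A \<in> carrier_mat N N" and Q': "mat_adjoint Q \<in> carrier_mat N N"
    using gk_A_carrier Q_carrier by (auto simp: mat_adjoint_carrier)
  have Y: "?Y \<in> carrier_vec N" using y_carrier[OF t] by simp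
  have derivative_eq: "(mat_adjoint Q *\<^sub>v (?A *\<^sub>v ?Y + ?G)) $ i = lam i * z t $ i + (mat_adjoint Q *\<^sub>v ?G) $ i"
  proof -
    have "(mat_adjoint Q *\<^sub>v (?A *\<^sub>v ?Y + ?G)) $ i
        = (mat_adjoint Q *\<^sub>v (?A *\<^sub>v ?Y)) $ i + (mat_adjoint Q *\<^sub>v ?G) $ i"
      using A Q' Y i by (simp add: mult_add_distrib_mat_vec[OF Q'] del: index_mult_mat_vec)
    also have "(mat_adjoint Q *\<^sub>v (?A *\<^sub>v ?Y)) $ i = lam i * z t $ i"
      using left_inverse_eigenbasis_mult_mat_vec[OF A P_carrier Q' eigvecs QP Y i]
        z_eq_mat_adjoint_mult[OF t] by simp
    finally show ?thesis .
  qed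
  have "((\<lambda>s. (mat_adjoint Q *\<^sub>v map_vec complex_of_real (y s)) $ i) has_vector_derivative
      (mat_adjoint Q *\<^sub>v (?A *\<^sub>v ?Y + ?G)) $ i) (at t within {0..tm})"
    unfolding gk_vector_field_of_real[OF y_carrier[OF t], symmetric]
    by (rule has_vector_derivative_mult_mat_vec_of_real[OF Q' i t _ y_carrier y_deriv[OF t]])
      (rule gk_vector_field_carrier[OF y_carrier[OF t]])
  then have "((\<lambda>s. (mat_adjoint Q *\<^sub>v map_vec complex_of_real (y s)) $ i) has_vector_derivative
      lam i * z t $ i + (mat_adjoint Q *\<^sub>v ?G) $ i) (at t within {0..tm})"
    by (simp only: derivative_eq)
  then show ?thesis
    by (rule has_vector_derivative_transform[OF t, rotated]) (simp add: z_eq_mat_adjoint_mult)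
qed

lemma continuous_on_z:
  assumes i: "i < N"
  shows "continuous_on {0..tm} (\<lambda>t. z t $ i)"
proof (unfold continuous_on_eq_continuous_within, intro ballI)
  fix t assume "t \<in> {0..tm}"
  then show "continuous (at t within {0..tm}) (\<lambda>t. z t $ i)"
    by (rule has_vector_derivative_continuous[OF z_has_vector_derivative[OF _ i]])
qed

(* low_modes mc t and high_modes mc t are the paper's y_c = P_c z_c and y_s = P_s z_s. *)
definition low_modes :: "nat \<Rightarrow> real \<Rightarrow> complex vec" where
  "low_modes mc t = first_cols mc P *\<^sub>v first_entries mc (z t)"

definition high_modes :: "nat \<Rightarrow> real \<Rightarrow> complex vec" where
  "high_modes mc t = last_cols mc P *\<^sub>v last_entries mc (z t)"

lemma low_modes_in_col_space: "low_modes mc t \<in> col_space (first_cols mc P)"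
  using P_carrier by (auto simp: low_modes_def col_space_def first_cols_def first_entries_def)

lemma low_modes_carrier: "low_modes mc t \<in> carrier_vec N"
  using P_carrier by (auto intro!: carrier_vecI simp: low_modes_def first_cols_def)

lemma high_modes_carrier: "high_modes mc t \<in> carrier_vec N"
  using P_carrier by (auto intro!: carrier_vecI simp: high_modes_def last_cols_def)

lemma low_plus_high_modes:
  "t \<in> {0..tm} \<Longrightarrow> mc \<le> N \<Longrightarrow> low_modes mc t + high_modes mc t = map_vec complex_of_real (y t)"
  using mult_mat_vec_first_last_cols[OF P_carrier z_carrier] z_coords
  by (simp add: low_modes_def high_modes_def)

lemma continuous_on_low_modes:
  assumes mc: "mc \<le> N" and k: "k < N"
  shows "continuous_on {0..tm} (\<lambda>t. low_modes mc t $ k)"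
  unfolding low_modes_def
proof (rule continuous_on_mult_mat_vec[where n = mc])
  show "first_cols mc P \<in> carrier_mat N mc" using P_carrier by (simp add: first_cols_def)
  show "continuous_on {0..tm} (\<lambda>t. first_entries mc (z t) $ i)" if "i < mc" for i
    using continuous_on_z[of i] that mc by (simp add: first_entries_def)
qed (use k in \<open>simp_all add: first_entries_def\<close>)

lemma modal_residual_eq:
  assumes t: "t \<in> {0..tm}" and mc: "mc \<le> N"
  shows "vec mc (\<lambda>i. vector_derivative (\<lambda>s. z s $ i) (at t within {0..tm}))
           - vec mc (\<lambda>i. lam i * z t $ i)
         = mat_adjoint (first_cols mc Q) *\<^sub>v
             (gk_G2 \<alpha> N (map_vec complex_of_real (y t)) + gk_G3 N (map_vec complex_of_real (y t)))"
    (is "?lhs = mat_adjoint (first_cols mc Q) *\<^sub>v ?G")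
proof (rule eq_vecI)
  have FQ: "first_cols mc Q \<in> carrier_mat N mc" using Q_carrier by (simp add: first_cols_def)
  fix i assume "i < dim_vec (mat_adjoint (first_cols mc Q) *\<^sub>v ?G)"
  then have i: "i < mc" using mat_adjoint_carrier[OF FQ] by simp
  have "vector_derivative (\<lambda>s. z s $ i) (at t within {0..tm})
      = lam i * z t $ i + (mat_adjoint Q *\<^sub>v ?G) $ i"
    using i mc
    by (intro vector_derivative_within_closed_interval[OF tm_pos t] z_has_vector_derivative[OF t]) simp
  then show "?lhs $ i = (mat_adjoint (first_cols mc Q) *\<^sub>v ?G) $ i"
    using i mat_adjoint_first_cols_mult_mat_vec[OF Q_carrier _ i mc, of ?G] by simp
qed (use Q_carrier in \<open>simp add: mat_adjoint_def first_cols_def\<close>)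

lemma time_avg_modal_residual_le:
  fixes \<phi> :: "complex vec \<Rightarrow> complex vec" and mc :: nat and R C :: real
  assumes mc: "mc \<le> N" and C: "0 \<le> C"
    and phi_range: "\<forall>v\<in>col_space (first_cols mc P). \<phi> v \<in> col_space (last_cols mc P)"
    and phi_cont: "\<forall>i<N. continuous_on {0..tm} (\<lambda>t. \<phi> (low_modes mc t) $ i)"
    and y_bound: "\<forall>t\<in>{0..tm}. cnorm (map_vec complex_of_real (y t)) \<le> R"
    and u_bound: "\<forall>t\<in>{0..tm}. cnorm (low_modes mc t + \<phi> (low_modes mc t)) \<le> R"
    and G_bound: "\<And>Y u. Y \<in> carrier_vec N \<Longrightarrow> u \<in> carrier_vec N \<Longrightarrow>
      cnorm Y \<le> R \<Longrightarrow> cnorm u \<le> R \<Longrightarrow>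
      (cnorm (mat_adjoint (first_cols mc Q) *\<^sub>v
         ((gk_G2 \<alpha> N Y + gk_G3 N Y) - (gk_G2 \<alpha> N u + gk_G3 N u))))^2 \<le> C * (cnorm (Y - u))^2"
  shows "time_avg tm (\<lambda>t.
      (cnorm (vec mc (\<lambda>i. vector_derivative (\<lambda>s. z s $ i) (at t within {0..tm}))
              - vec mc (\<lambda>i. lam i * z t $ i)
              - mat_adjoint (first_cols mc Q) *\<^sub>v
                  (gk_G2 \<alpha> N (low_modes mc t + \<phi> (low_modes mc t))
                   + gk_G3 N (low_modes mc t + \<phi> (low_modes mc t)))))^2)
    \<le> C * time_avg tm (\<lambda>t. (cnorm (high_modes mc t - \<phi> (low_modes mc t)))^2)"
proof (rule time_avg_le_cmult[OF tm_pos C])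
  let ?Y = "\<lambda>t. map_vec complex_of_real (y t)"
  let ?u = "\<lambda>t. low_modes mc t + \<phi> (low_modes mc t)"
  have FQ: "mat_adjoint (first_cols mc Q) \<in> carrier_mat mc N"
    using Q_carrier by (simp add: first_cols_def mat_adjoint_carrier)
  have phi_carrier: "\<phi> (low_modes mc t) \<in> carrier_vec N" for t
  proof -
    have "\<phi> (low_modes mc t) \<in> col_space (last_cols mc P)"
      using phi_range low_modes_in_col_space by blast
    then show ?thesis
      using P_carrier by (auto intro!: carrier_vecI simp: col_space_def last_cols_def)
  qed
  have high_eq: "high_modes mc t - \<phi> (low_modes mc t) = ?Y t - ?u t" if t: "t \<in> {0..tm}" for t
    unfolding low_plus_high_modes[OF t mc, symmetric]
    using low_modes_carrier[of mc t] high_modes_carrier[of mc t] phi_carrier[of t]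
    by (intro eq_vecI) auto
  show "(cnorm (vec mc (\<lambda>i. vector_derivative (\<lambda>s. z s $ i) (at t within {0..tm}))
              - vec mc (\<lambda>i. lam i * z t $ i)
              - mat_adjoint (first_cols mc Q) *\<^sub>v (gk_G2 \<alpha> N (?u t) + gk_G3 N (?u t))))^2
        \<le> C * (cnorm (high_modes mc t - \<phi> (low_modes mc t)))^2" if t: "t \<in> {0..tm}" for t
  proof -
    have "vec mc (\<lambda>i. vector_derivative (\<lambda>s. z s $ i) (at t within {0..tm}))
              - vec mc (\<lambda>i. lam i * z t $ i)
              - mat_adjoint (first_cols mc Q) *\<^sub>v (gk_G2 \<alpha> N (?u t) + gk_G3 N (?u t))
        = mat_adjoint (first_cols mc Q) *\<^sub>v
            ((gk_G2 \<alpha> N (?Y t) + gk_G3 N (?Y t)) - (gk_G2 \<alpha> N (?u t) + gk_G3 N (?u t)))"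
      unfolding modal_residual_eq[OF t mc] using FQ by (simp add: mult_minus_distrib_mat_vec)
    then show ?thesis
      unfolding high_eq[OF t]
      using G_bound y_carrier[OF t] low_modes_carrier phi_carrier y_bound t u_bound by simp
  qed
  have "continuous_on {0..tm} (\<lambda>t. cnorm (?Y t - ?u t))"
  proof (rule continuous_on_cnorm)
    show "?Y t - ?u t \<in> carrier_vec N" if "t \<in> {0..tm}" for t
      using y_carrier[OF that] low_modes_carrier[of mc t] phi_carrier[of t] by simp
  next
    fix k assume k: "k < N"
    have "continuous_on {0..tm} (\<lambda>t. complex_of_real (y t $ k) - (low_modes mc t $ k + \<phi> (low_modes mc t) $ k))"
      using continuous_on_y[OF k] continuous_on_low_modes[OF mc k] phi_cont k
      by (intro continuous_intros) auto
    then show "continuous_on {0..tm} (\<lambda>t. (?Y t - ?u t) $ k)"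
    proof (rule continuous_on_eq)
      fix t assume "t \<in> {0..tm}"
      then show "complex_of_real (y t $ k) - (low_modes mc t $ k + \<phi> (low_modes mc t) $ k)
          = (?Y t - ?u t) $ k"
        using k y_carrier[of t] low_modes_carrier[of mc t] phi_carrier[of t] by simp
    qed
  qed
  then have "continuous_on {0..tm} (\<lambda>t. (cnorm (high_modes mc t - \<phi> (low_modes mc t)))^2)"
    by (intro continuous_intros) (rule continuous_on_eq, auto simp: high_eq)
  then show "(\<lambda>t. (cnorm (high_modes mc t - \<phi> (low_modes mc t)))^2) integrable_on {0..tm}"
    by (rule integrable_continuous_real)
qed simp

end

theorem proposition1:
  fixes \<alpha> \<tau> R :: real and N mc :: nat
    and lam :: "nat \<Rightarrow> complex" and P Q :: "complex mat"
  defines "Ac \<equiv> map_mat complex_of_real (gk_A \<alpha> \<tau> N)"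
  assumes alpha: "0 < \<alpha>" "\<alpha> < 1"
    and tau: "0 < \<tau>"
    and N: "2 \<le> N" and mc: "1 \<le> mc" "mc < N"
    and R: "0 < R"
    and diagonalizable: "\<exists>D. diagonal_mat D \<and> similar_mat Ac D"
    and P_carrier: "P \<in> carrier_mat N N"
    and eigvecs: "\<forall>i<N. col P i \<noteq> 0\<^sub>v N \<and> Ac *\<^sub>v col P i = lam i \<cdot>\<^sub>v col P i"
    and multiplicity: "char_poly Ac = (\<Prod>i<N. [:- lam i, 1:])"
    and ordered: "\<forall>i j. i < j \<and> j < N \<longrightarrow>
                    Re (lam j) < Re (lam i) \<or> (Re (lam j) = Re (lam i) \<and> Im (lam j) \<le> Im (lam i))"
    and Q_carrier: "Q \<in> carrier_mat N N"
    and Q_eigvecs: "\<forall>i<N. col Q i \<noteq> 0\<^sub>v N \<and>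
                      (\<exists>\<mu>. mat_adjoint Ac *\<^sub>v col Q i = \<mu> \<cdot>\<^sub>v col Q i)"
    and QP: "mat_adjoint Q * P = 1\<^sub>m N"
  shows "\<exists>C > 0. \<forall>(tm::real) (y :: real \<Rightarrow> real vec) (z :: real \<Rightarrow> complex vec)
           (\<phi> :: complex vec \<Rightarrow> complex vec).
      0 < tm
      \<and> (\<forall>t\<in>{0..tm}. y t \<in> carrier_vec N)
      \<and> (\<forall>t\<in>{0..tm}. \<forall>i<N. ((\<lambda>s. y s $ i) has_real_derivative
             ((gk_A \<alpha> \<tau> N *\<^sub>v y t + gk_G2 \<alpha> N (y t) + gk_G3 N (y t)) $ i)) (at t within {0..tm}))
      \<and> (\<forall>t\<in>{0..tm}. z t \<in> carrier_vec N \<and> P *\<^sub>v z t = map_vec complex_of_real (y t))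
      \<and> (\<forall>v\<in>col_space (first_cols mc P). \<phi> v \<in> col_space (last_cols mc P))
      \<and> (\<forall>i<N. continuous_on {0..tm}
             (\<lambda>t. \<phi> (first_cols mc P *\<^sub>v first_entries mc (z t)) $ i))
      \<and> (\<forall>t\<in>{0..tm}. cnorm (map_vec complex_of_real (y t)) \<le> R)
      \<and> (\<forall>t\<in>{0..tm}. cnorm (first_cols mc P *\<^sub>v first_entries mc (z t)
                              + \<phi> (first_cols mc P *\<^sub>v first_entries mc (z t))) \<le> R)
      \<longrightarrow>
      time_avg tm (\<lambda>t.
         (cnorm (vec mc (\<lambda>i. vector_derivative (\<lambda>s. z s $ i) (at t within {0..tm}))
                 - vec mc (\<lambda>i. lam i * z t $ i)
                 - mat_adjoint (first_cols mc Q) *\<^sub>v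
                     (gk_G2 \<alpha> N (first_cols mc P *\<^sub>v first_entries mc (z t)
                                  + \<phi> (first_cols mc P *\<^sub>v first_entries mc (z t)))
                      + gk_G3 N (first_cols mc P *\<^sub>v first_entries mc (z t)
                                  + \<phi> (first_cols mc P *\<^sub>v first_entries mc (z t))))))^2)
      \<le> C * time_avg tm (\<lambda>t.
         (cnorm (last_cols mc P *\<^sub>v last_entries mc (z t)
                 - \<phi> (first_cols mc P *\<^sub>v first_entries mc (z t))))^2)"
proof -
  \<comment> \<open>Only \<open>Q\<^sup>* P = I\<close> and the eigenvector equations for \<open>P\<close> enter the estimate.\<close>
  have FQ: "mat_adjoint (first_cols mc Q) \<in> carrier_mat mc N"
    using Q_carrier by (simp add: first_cols_def mat_adjoint_carrier)
  obtain C where C: "0 < C" and G_bound: "\<And>Y u. Y \<in> carrier_vec N \<Longrightarrow> u \<in> carrier_vec N \<Longrightarrow>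
      cnorm Y \<le> R \<Longrightarrow> cnorm u \<le> R \<Longrightarrow>
      (cnorm (mat_adjoint (first_cols mc Q) *\<^sub>v
         ((gk_G2 \<alpha> N Y + gk_G3 N Y) - (gk_G2 \<alpha> N u + gk_G3 N u))))^2 \<le> C * (cnorm (Y - u))^2"
    using gk_G_diff_mult_mat_vec_bound[OF FQ] by blast
  show ?thesis
    apply (intro exI[of _ C] conjI C allI impI)
    subgoal premises H for tm y z \<phi>
    proof -
      interpret gk_modal_trajectory \<alpha> \<tau> N lam P Q tm y z
        using H P_carrier Q_carrier eigvecs QP by unfold_locales (auto simp: Ac_def)
      show ?thesis
        by (rule time_avg_modal_residual_le[unfolded low_modes_def high_modes_def])
          (use H mc C G_bound in auto)
    qed
    done
qed

end
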